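(* Consider the execution of Greedy Dual on any MPMD or MBPMD instance. For any request $u$ and any time $\tau\ge\mathrm{atime}(u)$, $$\sum_{S:\,u\in S} y_S(\tau)\le \tau-\mathrm{atime}(u),$$ and equality holds if $u$ is still free (unmatched) at time $\tau$.
   Context: Problem (MPMD / MBPMD). Let $(\mathcal{X},\mathrm{dist})$ be a metric space. An instance consists of $2m$ requests $u_1,\dots,u_{2m}$. Each request $u$ is a triple $(\mathrm{pos}(u),\mathrm{atime}(u),\mathrm{sgn}(u))$, where $\mathrm{pos}(u)\in\mathcal{X}$ is its location and $\mathrm{atime}(u)\ge0$ is its arrival time, with arrival times nondecreasing. In MPMD, $\mathrm{sgn}(u)=0$ for all requests. In MBPMD, exactly $m$ requests have sign $+1$ and $m$ have sign $-1$. At time $\tau$, an algorithm may match two arrived, unmatched requests $u,v$ with $\mathrm{sgn}(u)=-\mathrm{sgn}(v)$, at cost $\mathrm{dist}(\mathrm{pos}(u),\mathrm{pos}(v))$ (connection cost) plus $(\tau-\mathrm{atime}(u))+(\tau-\mathrm{atime}(v))$ (waiting costs). All requests must eventually be matched. Notation. Edges are unordered pairs $\{u,v\}$ of distinct requests with $\mathrm{sgn}(u)=-\mathrm{sgn}(v)$. For a set $S$ of requests, $\delta(S)$ is the set of edges with exactly one endpoint in $S$. In MPMD, $\mathrm{sur}(S)=|S|\bmod 2$; in MBPMD, $\mathrm{sur}(S)=|\sum_{u\in S}\mathrm{sgn}(u)|$. For an edge $e=(u,v)$, $\mathrm{cost}(e)=\mathrm{dist}(\mathrm{pos}(u),\mathrm{pos}(v))+|\mathrm{atime}(u)-\mathrm{atime}(v)|$.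 Algorithm Greedy Dual (GD). GD maintains a dual variable $y_S\ge0$ for every set $S$ of already-arrived requests; $y_S(\tau)$ denotes its value at time $\tau$. It also maintains a partition of the arrived requests into active sets, with $\mathcal{A}(u)$ denoting the active set containing $u$. An active set is growing if it contains at least one free request, and non-growing otherwise. - When a request $u$ arrives, $\mathcal{A}(u)\leftarrow\{u\}$ becomes a new active set, and $y_S\leftarrow 0$ for every new set $S$ containing $u$. - Tight-constraint event: while there is an edge $e=(u,v)$ between arrived requests with $\mathcal{A}(u)\neq\mathcal{A}(v)$ and $\sum_{S:\,e\in\delta(S)}y_S=\mathrm{cost}(e)$, GD does the following. It merges the two sets: $S=\mathcal{A}(u)\cup\mathcal{A}(v)$ becomes active and $\mathcal{A}(w)\leftarrow S$ for all $w\in S$, while $\mathcal{A}(u)$ and $\mathcal{A}(v)$ become inactive. It marks the edge $e$. Then, while there are free $u',v'\in S$ with $\mathrm{sgn}(u')=-\mathrm{sgn}(v')$, it matches $u'$ with $v'$ at the current time. - At all other times, $y_S$ increases continuously at rate $1$ (the same rate as time) for every active growing set $S$; all other dual variables stay constant. *)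

theory Defs
  imports Complex_Main
begin

definition is_MPMD :: "nat \<Rightarrow> (nat \<Rightarrow> int) \<Rightarrow> bool" where
  "is_MPMD m sg \<longleftrightarrow> (\<forall>i<2*m. sg i = 0)"

definition is_MBPMD :: "nat \<Rightarrow> (nat \<Rightarrow> int) \<Rightarrow> bool" where
  "is_MBPMD m sg \<longleftrightarrow> (\<forall>i<2*m. sg i = 1 \<or> sg i = -1)
      \<and> card {i. i < 2*m \<and> sg i = 1} = m \<and> card {i. i < 2*m \<and> sg i = -1} = m"

definition valid_instance ::
  "nat \<Rightarrow> (nat \<Rightarrow> 'a::metric_space) \<Rightarrow> (nat \<Rightarrow> real) \<Rightarrow> (nat \<Rightarrow> int) \<Rightarrow> bool" where
  "valid_instance m pos atm sg \<longleftrightarrow>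
     (\<forall>i<2*m. 0 \<le> atm i) \<and> (\<forall>i j. i \<le> j \<and> j < 2*m \<longrightarrow> atm i \<le> atm j)
     \<and> (is_MPMD m sg \<or> is_MBPMD m sg)"

definition is_edge :: "(nat \<Rightarrow> int) \<Rightarrow> nat \<Rightarrow> nat \<Rightarrow> bool" where
  "is_edge sg u v \<longleftrightarrow> u \<noteq> v \<and> sg u = - sg v"

definition edge_cost ::
  "(nat \<Rightarrow> 'a::metric_space) \<Rightarrow> (nat \<Rightarrow> real) \<Rightarrow> nat \<Rightarrow> nat \<Rightarrow> real" where
  "edge_cost pos atm u v = dist (pos u) (pos v) + \<bar>atm u - atm v\<bar>"

text \<open>Configuration of Greedy Dual: current time, arrived requests, active sets,
  dual variables (for every set of requests), matched pairs, marked edges.\<close>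
record gd_cfg =
  time :: real
  arr :: "nat set"
  act :: "nat set set"
  yv :: "nat set \<Rightarrow> real"
  mt :: "(nat \<times> nat) set"
  mk :: "(nat \<times> nat) set"

definition matched :: "gd_cfg \<Rightarrow> nat set" where
  "matched c = fst ` mt c \<union> snd ` mt c"

definition free :: "gd_cfg \<Rightarrow> nat set" where
  "free c = arr c - matched c"

text \<open>Sum of y_S over the sets S of arrived requests with e = {u,v} in delta(S).\<close>
definition dual_load :: "gd_cfg \<Rightarrow> nat \<Rightarrow> nat \<Rightarrow> real" where
  "dual_load c u v = (\<Sum>S\<in>{S. S \<subseteq> arr c \<and> ((u \<in> S) \<noteq> (v \<in> S))}. yv c S)"

definition tight ::
  "(nat \<Rightarrow> 'a::metric_space) \<Rightarrow> (nat \<Rightarrow> real) \<Rightarrow> (nat \<Rightarrow> int) \<Rightarrow> gd_cfg \<Rightarrow> nat \<Rightarrow> nat \<Rightarrow> bool" where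
  "tight pos atm sg c u v \<longleftrightarrow> u \<in> arr c \<and> v \<in> arr c \<and> is_edge sg u v
     \<and> (\<exists>S1\<in>act c. \<exists>S2\<in>act c. u \<in> S1 \<and> v \<in> S2 \<and> S1 \<noteq> S2)
     \<and> dual_load c u v = edge_cost pos atm u v"

definition grown :: "gd_cfg \<Rightarrow> real \<Rightarrow> nat set \<Rightarrow> real" where
  "grown c d S = yv c S + (if S \<in> act c \<and> S \<inter> free c \<noteq> {} then d else 0)"

definition matching_loop :: "(nat \<Rightarrow> int) \<Rightarrow> gd_cfg \<Rightarrow> nat set \<Rightarrow> (nat \<times> nat) set \<Rightarrow> bool" where
  "matching_loop sg c S P \<longleftrightarrow>
     (\<forall>(a,b)\<in>P. a \<in> S \<inter> free c \<and> b \<in> S \<inter> free c \<and> is_edge sg a b)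
     \<and> (\<forall>(a,b)\<in>P. \<forall>(a',b')\<in>P. (a,b) \<noteq> (a',b') \<longrightarrow> {a,b} \<inter> {a',b'} = {})
     \<and> (\<forall>a b. a \<in> S \<inter> free c - (fst ` P \<union> snd ` P) \<longrightarrow> b \<in> S \<inter> free c - (fst ` P \<union> snd ` P)
              \<longrightarrow> \<not> is_edge sg a b)"

definition gd_init :: gd_cfg where
  "gd_init = \<lparr>time = 0, arr = {}, act = {}, yv = (\<lambda>_. 0), mt = {}, mk = {}\<rparr>"

inductive gd_step ::
  "nat \<Rightarrow> (nat \<Rightarrow> 'a::metric_space) \<Rightarrow> (nat \<Rightarrow> real) \<Rightarrow> (nat \<Rightarrow> int) \<Rightarrow> gd_cfg \<Rightarrow> gd_cfg \<Rightarrow> bool"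
  for m pos atm sg where
  arrive: "\<lbrakk>u < 2*m; u \<notin> arr c; atm u = time c\<rbrakk> \<Longrightarrow>
     gd_step m pos atm sg c
       (c\<lparr>arr := insert u (arr c), act := insert {u} (act c),
          yv := (\<lambda>S. if u \<in> S then 0 else yv c S)\<rparr>)"
| merge: "\<lbrakk>tight pos atm sg c u v; S1 \<in> act c; S2 \<in> act c; u \<in> S1; v \<in> S2; S1 \<noteq> S2;
           matching_loop sg c (S1 \<union> S2) P\<rbrakk> \<Longrightarrow>
     gd_step m pos atm sg c
       (c\<lparr>act := insert (S1 \<union> S2) (act c - {S1, S2}), mk := insert (u,v) (mk c),
          mt := mt c \<union> P\<rparr>)"
| wait: "\<lbrakk>0 < d; \<forall>u<2*m. u \<notin> arr c \<longrightarrow> time c + d \<le> atm u;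
          \<forall>s. 0 \<le> s \<and> s < d \<longrightarrow> (\<forall>u v. \<not> tight pos atm sg (c\<lparr>yv := grown c s\<rparr>) u v)\<rbrakk> \<Longrightarrow>
     gd_step m pos atm sg c (c\<lparr>time := time c + d, yv := grown c d\<rparr>)"

end

theory Submission
  imports Defs
begin

text \<open>The sum of the duals y_S over the sets S containing u changes only in waiting phases:
  there it grows at rate 1 if the unique active set containing \<open>u\<close> still has a free request, in particular whenever \<open>u\<close>
  itself is free, and at rate 0 otherwise. An arrival creates new dual variables with value 0,
  and a merge changes no dual variable. So it starts at 0 when \<open>u\<close> arrives and afterwards
  grows at most as fast as time, and exactly as fast while \<open>u\<close> is free.\<close>

definition duals_containing :: "gd_cfg \<Rightarrow> nat \<Rightarrow> real" where
  "duals_containing c v = (\<Sum>S\<in>{S. S \<subseteq> arr c \<and> v \<in> S}. yv c S)"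

definition active_partition :: "gd_cfg \<Rightarrow> bool" where
  "active_partition c \<longleftrightarrow> finite (arr c) \<and> (\<forall>S\<in>act c. S \<subseteq> arr c)
     \<and> (\<forall>v\<in>arr c. \<exists>!S. S \<in> act c \<and> v \<in> S)"

definition dual_time_bound :: "(nat \<Rightarrow> real) \<Rightarrow> gd_cfg \<Rightarrow> bool" where
  "dual_time_bound atm c \<longleftrightarrow> (\<forall>v\<in>arr c. duals_containing c v \<le> time c - atm v
     \<and> (v \<notin> matched c \<longrightarrow> duals_containing c v = time c - atm v))"

definition arrivals_pending :: "nat \<Rightarrow> (nat \<Rightarrow> real) \<Rightarrow> gd_cfg \<Rightarrow> bool" where
  "arrivals_pending m atm c \<longleftrightarrow> (\<forall>v<2*m. v \<notin> arr c \<longrightarrow> time c \<le> atm v)"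

definition gd_invariant :: "nat \<Rightarrow> (nat \<Rightarrow> real) \<Rightarrow> gd_cfg \<Rightarrow> bool" where
  "gd_invariant m atm c \<longleftrightarrow>
     active_partition c \<and> arrivals_pending m atm c \<and> dual_time_bound atm c"

lemma finite_subsets_containing: "finite A \<Longrightarrow> finite {S. S \<subseteq> A \<and> v \<in> S}"
  by (rule finite_subset[of _ "Pow A"]) auto

lemma sum_subsets_containing_insert_reset:
  fixes f :: "'a set \<Rightarrow> real"
  assumes "u \<notin> A" "finite A"
  shows "(\<Sum>S\<in>{S. S \<subseteq> insert u A \<and> v \<in> S}. if u \<in> S then 0 else f S)
       = (\<Sum>S\<in>{S. S \<subseteq> A \<and> v \<in> S}. f S)"
proof -
  have fin: "finite {S. S \<subseteq> insert u A \<and> v \<in> S}"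
    using assms(2) by (intro finite_subsets_containing) simp
  have "(\<Sum>S\<in>{S. S \<subseteq> insert u A \<and> v \<in> S}. if u \<in> S then 0 else f S)
      = (\<Sum>S\<in>{S. S \<subseteq> insert u A \<and> v \<in> S} \<inter> {S. u \<notin> S}. f S)"
    unfolding sum.inter_restrict[OF fin] by (rule sum.cong) auto
  also have "{S. S \<subseteq> insert u A \<and> v \<in> S} \<inter> {S. u \<notin> S} = {S. S \<subseteq> A \<and> v \<in> S}"
    using assms(1) by blast
  finally show ?thesis .
qed

lemma sum_subsets_containing_block_indicator:
  fixes d :: real
  assumes "finite A" "T \<in> K" "v \<in> T" "T \<subseteq> A" "\<And>S. S \<in> K \<Longrightarrow> v \<in> S \<Longrightarrow> S = T"
  shows "(\<Sum>S\<in>{S. S \<subseteq> A \<and> v \<in> S}. if S \<in> K \<and> P S then d else 0) = (if P T then d else 0)"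
proof -
  have fin: "finite {S. S \<subseteq> A \<and> v \<in> S}" using assms(1) by (rule finite_subsets_containing)
  have only_T: "{S. S \<subseteq> A \<and> v \<in> S} \<inter> {S. S \<in> K \<and> P S} = (if P T then {T} else {})"
  proof (intro set_eqI iffI)
    fix S assume "S \<in> {S. S \<subseteq> A \<and> v \<in> S} \<inter> {S. S \<in> K \<and> P S}"
    then show "S \<in> (if P T then {T} else {})" using assms(5) by auto
  next
    fix S assume "S \<in> (if P T then {T} else {})"
    then show "S \<in> {S. S \<subseteq> A \<and> v \<in> S} \<inter> {S. S \<in> K \<and> P S}"
      using assms(2-4) by (auto split: if_splits)
  qed
  have "(\<Sum>S\<in>{S. S \<subseteq> A \<and> v \<in> S}. if S \<in> K \<and> P S then d else 0)
      = (\<Sum>S\<in>{S. S \<subseteq> A \<and> v \<in> S} \<inter> {S. S \<in> K \<and> P S}. d)"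
    unfolding sum.inter_restrict[OF fin] by simp
  also have "\<dots> = (if P T then d else 0)"
    unfolding only_T by simp
  finally show ?thesis .
qed

lemma unique_block_insert_singleton:
  assumes fresh: "\<forall>S\<in>K. u \<notin> S" and unique: "\<forall>v\<in>B. \<exists>!S. S \<in> K \<and> v \<in> S"
  shows "\<forall>v\<in>insert u B. \<exists>!S. S \<in> insert {u} K \<and> v \<in> S"
proof
  fix v assume v: "v \<in> insert u B"
  show "\<exists>!S. S \<in> insert {u} K \<and> v \<in> S"
  proof (cases "v = u")
    case True
    have "S = {u}" if "S \<in> insert {u} K" "u \<in> S" for S
      using that fresh by blast
    then show ?thesis using True by (intro ex1I[of _ "{u}"]) simp_all
  next
    case False
    then obtain T where "T \<in> K" "v \<in> T" "\<And>S. S \<in> K \<Longrightarrow> v \<in> S \<Longrightarrow> S = T"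
      using v unique by blast
    then show ?thesis using False by (intro ex1I[of _ T]) blast+
  qed
qed

lemma unique_block_merge:
  assumes unique: "\<forall>v\<in>B. \<exists>!S. S \<in> K \<and> v \<in> S" and "S1 \<in> K" "S2 \<in> K"
  shows "\<forall>v\<in>B. \<exists>!S. S \<in> insert (S1 \<union> S2) (K - {S1, S2}) \<and> v \<in> S"
proof
  fix v assume "v \<in> B"
  then obtain T where T: "T \<in> K" "v \<in> T" and T_unique: "\<And>S. S \<in> K \<Longrightarrow> v \<in> S \<Longrightarrow> S = T"
    using unique by blast
  show "\<exists>!S. S \<in> insert (S1 \<union> S2) (K - {S1, S2}) \<and> v \<in> S"
  proof (cases "T = S1 \<or> T = S2")
    case True
    then show ?thesis using T T_unique by (intro ex1I[of _ "S1 \<union> S2"]) blast+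
  next
    case False
    then show ?thesis using T T_unique assms(2,3) by (intro ex1I[of _ T]) blast+
  qed
qed

lemma active_partition_init: "active_partition gd_init"
  by (simp add: active_partition_def gd_init_def)

lemma active_partition_step:
  assumes "gd_step m pos atm sg c c'" "active_partition c"
  shows "active_partition c'"
  using assms(1)
proof cases
  case (arrive u)
  have blocks: "\<forall>S\<in>act c. S \<subseteq> arr c" and unique: "\<forall>v\<in>arr c. \<exists>!S. S \<in> act c \<and> v \<in> S"
    using assms(2) by (simp_all add: active_partition_def)
  have "\<forall>S\<in>insert {u} (act c). S \<subseteq> insert u (arr c)" using blocks by blast
  moreover have "\<forall>S\<in>act c. u \<notin> S" using blocks arrive(3) by blast
  then have "\<forall>v\<in>insert u (arr c). \<exists>!S. S \<in> insert {u} (act c) \<and> v \<in> S"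
    by (rule unique_block_insert_singleton[OF _ unique])
  ultimately show ?thesis
    using arrive(1) assms(2) by (simp add: active_partition_def)
next
  case (merge u v S1 S2 P)
  have blocks: "\<forall>S\<in>act c. S \<subseteq> arr c" and unique: "\<forall>v\<in>arr c. \<exists>!S. S \<in> act c \<and> v \<in> S"
    using assms(2) by (simp_all add: active_partition_def)
  have "\<forall>S\<in>insert (S1 \<union> S2) (act c - {S1, S2}). S \<subseteq> arr c"
    using blocks merge(3,4) by blast
  moreover have "\<forall>v\<in>arr c. \<exists>!S. S \<in> insert (S1 \<union> S2) (act c - {S1, S2}) \<and> v \<in> S"
    using unique merge(3,4) by (rule unique_block_merge)
  ultimately show ?thesis
    using merge(1) assms(2) by (simp add: active_partition_def)
next
  case (wait d)
  then show ?thesis using assms(2) by (simp add: active_partition_def)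
qed

lemma arrivals_pending_step:
  assumes "gd_step m pos atm sg c c'" "arrivals_pending m atm c"
  shows "arrivals_pending m atm c'"
  using assms(1)
proof cases
  case (wait d)
  then show ?thesis by (simp add: arrivals_pending_def)
qed (use assms(2) in \<open>auto simp: arrivals_pending_def\<close>)

lemma duals_containing_arrive:
  assumes "finite (arr c)" "u \<notin> arr c" "v \<in> arr c"
  shows "duals_containing (c\<lparr>arr := insert u (arr c), act := A,
           yv := \<lambda>S. if u \<in> S then 0 else yv c S\<rparr>) v = duals_containing c v"
  using sum_subsets_containing_insert_reset[OF assms(2,1)]
  by (simp add: duals_containing_def)

lemma duals_containing_arrival_self:
  "duals_containing (c\<lparr>arr := B, act := A, yv := \<lambda>S. if u \<in> S then 0 else yv c S\<rparr>) u = 0"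
  by (simp add: duals_containing_def)

lemma duals_containing_grown:
  assumes "active_partition c" "v \<in> arr c" "0 \<le> d"
  shows "duals_containing (c\<lparr>time := t, yv := grown c d\<rparr>) v \<le> duals_containing c v + d"
    and "v \<notin> matched c \<Longrightarrow> duals_containing (c\<lparr>time := t, yv := grown c d\<rparr>) v = duals_containing c v + d"
proof -
  have fin: "finite (arr c)" and blocks: "\<forall>S\<in>act c. S \<subseteq> arr c"
    and "\<exists>!S. S \<in> act c \<and> v \<in> S"
    using assms(1,2) unfolding active_partition_def by blast+
  then obtain T where T: "T \<in> act c" "v \<in> T" "\<And>S. S \<in> act c \<Longrightarrow> v \<in> S \<Longrightarrow> S = T"
    by blast
  have "duals_containing (c\<lparr>time := t, yv := grown c d\<rparr>) v
      = duals_containing c v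
        + (\<Sum>S\<in>{S. S \<subseteq> arr c \<and> v \<in> S}. if S \<in> act c \<and> S \<inter> free c \<noteq> {} then d else 0)"
    unfolding duals_containing_def grown_def by (simp add: sum.distrib)
  also have "\<dots> = duals_containing c v + (if T \<inter> free c \<noteq> {} then d else 0)"
    using sum_subsets_containing_block_indicator[OF fin T(1,2) _ T(3)] blocks T(1) by simp
  finally have growth: "duals_containing (c\<lparr>time := t, yv := grown c d\<rparr>) v
      = duals_containing c v + (if T \<inter> free c \<noteq> {} then d else 0)" .
  show "duals_containing (c\<lparr>time := t, yv := grown c d\<rparr>) v \<le> duals_containing c v + d"
    using growth assms(3) by simp
  assume "v \<notin> matched c"
  then have "v \<in> T \<inter> free c" using T(2) assms(2) by (simp add: free_def)
  then show "duals_containing (c\<lparr>time := t, yv := grown c d\<rparr>) v = duals_containing c v + d"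
    using growth by auto
qed

lemma dual_time_bound_init: "dual_time_bound atm gd_init"
  by (simp add: dual_time_bound_def gd_init_def)

lemma dual_time_bound_step:
  assumes step: "gd_step m pos atm sg c c'" and "active_partition c" "dual_time_bound atm c"
  shows "dual_time_bound atm c'"
  using step
proof cases
  case (arrive u)
  have "finite (arr c)" using assms(2) by (simp add: active_partition_def)
  then show ?thesis
    using arrive assms(3) duals_containing_arrive duals_containing_arrival_self
    by (auto simp: dual_time_bound_def matched_def)
next
  case (merge u v S1 S2 P)
  then have "duals_containing c' = duals_containing c" "matched c \<subseteq> matched c'"
    by (auto simp: duals_containing_def matched_def fun_eq_iff)
  then show ?thesis using merge assms(3) by (auto simp: dual_time_bound_def)
next
  case (wait d)
  then show ?thesis
    using assms(3) duals_containing_grown[OF assms(2), of _ d "time c + d"]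
    by (fastforce simp: dual_time_bound_def matched_def)
qed

lemma gd_invariant_reachable:
  assumes "(gd_step m pos atm sg)\<^sup>*\<^sup>* gd_init c" "\<forall>v<2*m. 0 \<le> atm v"
  shows "gd_invariant m atm c"
  using assms(1)
proof (induction rule: rtranclp_induct)
  case base
  then show ?case
    using assms(2) active_partition_init dual_time_bound_init
    by (simp add: gd_invariant_def arrivals_pending_def gd_init_def)
next
  case (step c c')
  then show ?case
    using active_partition_step arrivals_pending_step dual_time_bound_step
    unfolding gd_invariant_def by blast
qed

theorem lemma2:
  fixes m :: nat and pos :: "nat \<Rightarrow> 'a::metric_space" and atm :: "nat \<Rightarrow> real"
    and sg :: "nat \<Rightarrow> int" and c :: gd_cfg and u :: nat
  assumes "valid_instance m pos atm sg"
    and "(gd_step m pos atm sg)\<^sup>*\<^sup>* gd_init c"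
    and "u < 2*m"
    and "atm u \<le> time c"
  shows "(\<Sum>S\<in>{S. S \<subseteq> arr c \<and> u \<in> S}. yv c S) \<le> time c - atm u
       \<and> (u \<notin> matched c \<longrightarrow> (\<Sum>S\<in>{S. S \<subseteq> arr c \<and> u \<in> S}. yv c S) = time c - atm u)"
proof -
  have "\<forall>v<2*m. 0 \<le> atm v" using assms(1) unfolding valid_instance_def by blast
  with assms(2) have inv: "gd_invariant m atm c" by (rule gd_invariant_reachable)
  show ?thesis
  proof (cases "u \<in> arr c")
    case True
    then show ?thesis
      using inv unfolding gd_invariant_def dual_time_bound_def duals_containing_def by blast
  next
    case False
    then have "time c = atm u"
      using inv assms(3,4) unfolding gd_invariant_def arrivals_pending_def by fastforce
    moreover have "{S. S \<subseteq> arr c \<and> u \<in> S} = {}" using False by auto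
    ultimately show ?thesis by (simp only: sum.empty) simp
  qed
qed

end
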